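(* Let $(N,+,* )$ be a planar nearring presented by $(\Phi,R,M)$, and suppose some $d\in D(N)$ is nonzero and not a zero multiplier. Let $K$ be the set of zero multipliers of $N$ and $F=d*N$. Then: $F=d\Phi\cup\{0\}$ is a subnearring of $N$ which is a nearfield whose multiplicative group $F\setminus\{0\}$ is isomorphic to $\Phi$; $K$ is a normal subgroup of $(N,+)$ invariant under $\Phi$ (so $\Phi$ acts on $K$ as a group of fixed point free automorphisms); $(N,+)$ is the internal semidirect product $K\rtimes F$, i.e. every element of $N$ is uniquely $k+f$ with $k\in K$, $f\in F$; and for $k,k'\in K$, $f,f'\in F$, $$(k+f)*(k'+f')=\begin{cases}0 & f'=0,\\ k\phi_{f'}+f\phi_{f'} & f'\ne0,\end{cases}$$ where for nonzero $f'$, $\phi_{f'}\in\Phi$ is defined by $f'=r_{f'}\phi_{f'}$ with $r_{f'}\in R$. Moreover $K$ is an ideal of $N$.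
   Context: A (right) nearring $(N,+,* )$ is a set with a group $(N,+)$, a semigroup $(N,* )$, and right distributivity $(a+b)*c=a*c+b*c$. $N$ is planar if the relation $a\cong b$ ($x*a=x*b$ for all $x$) has at least $3$ classes and for all $a,b,c$ with $a\not\cong b$ the equation $x*a=x*b+c$ has a unique solution. A nearfield is a nearring in which $(N\setminus\{0\},* )$ is a group. An ideal is a normal additive subgroup $I$ with $i*n\in I$ and $n*m-n*(m+i)\in I$ for all $i\in I$, $n,m\in N$. Every planar nearring arises as follows, and we always consider it so presented. $\Phi\le \mathrm{Aut}(N,+)$ acts on the right, is fixed point free, and $n\mapsto -n+n\phi$ is bijective for each $\phi\ne\mathrm{id}$. $R$ is a set of representatives of the $\Phi$-orbits of $N\setminus\{0\}$ and $M\subseteq R$. Each $a\ne0$ is uniquely $a=r_a\phi_a$, $r_a\in R$, $\phi_a\in\Phi$. Multiplication: $a*b=0$ if $b=0$ or $r_b\in M$, else $a*b=a\phi_b$ (and $0*b=0$). The zero multipliers are the elements of $M\Phi\cup\{0\}$, i.e. those $n$ with $x*n=0$ for all $x$. $D(N)=\{n: n*(a+b)=n*a+n*b\ \forall a,b\}$. *)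

theory Defs
  imports Main
begin

text \<open>Automorphisms act on the right; we write the image of n under phi as phi n, so the
  product phi psi (first phi, then psi) is the function psi o phi.\<close>

definition additive_aut :: "('a::group_add \<Rightarrow> 'a) \<Rightarrow> bool" where
  "additive_aut \<phi> \<longleftrightarrow> bij \<phi> \<and> (\<forall>x y. \<phi> (x + y) = \<phi> x + \<phi> y)"

text \<open>Data (Phi, R, M) presenting a planar nearring (Ferrero pair + orbit representatives).\<close>
definition ferrero_data :: "('a::group_add \<Rightarrow> 'a) set \<Rightarrow> 'a set \<Rightarrow> 'a set \<Rightarrow> bool" where
  "ferrero_data \<Phi> R M \<longleftrightarrow>
     (\<forall>\<phi>\<in>\<Phi>. additive_aut \<phi>) \<and>
     id \<in> \<Phi> \<and> (\<forall>\<phi>\<in>\<Phi>. \<forall>\<psi>\<in>\<Phi>. \<psi> \<circ> \<phi> \<in> \<Phi>) \<and> (\<forall>\<phi>\<in>\<Phi>. inv \<phi> \<in> \<Phi>) \<and>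
     (\<forall>\<phi>\<in>\<Phi>. \<phi> \<noteq> id \<longrightarrow> (\<forall>n. \<phi> n = n \<longrightarrow> n = 0)) \<and>
     (\<forall>\<phi>\<in>\<Phi>. \<phi> \<noteq> id \<longrightarrow> bij (\<lambda>n. - n + \<phi> n)) \<and>
     0 \<notin> R \<and> (\<forall>a. a \<noteq> 0 \<longrightarrow> (\<exists>!r. r \<in> R \<and> (\<exists>\<phi>\<in>\<Phi>. a = \<phi> r))) \<and>
     M \<subseteq> R"

definition rep_of :: "('a::group_add \<Rightarrow> 'a) set \<Rightarrow> 'a set \<Rightarrow> 'a \<Rightarrow> 'a" where
  "rep_of \<Phi> R a = (THE r. r \<in> R \<and> (\<exists>\<phi>\<in>\<Phi>. a = \<phi> r))"

definition phi_of :: "('a::group_add \<Rightarrow> 'a) set \<Rightarrow> 'a set \<Rightarrow> 'a \<Rightarrow> ('a \<Rightarrow> 'a)" where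
  "phi_of \<Phi> R a = (THE \<phi>. \<phi> \<in> \<Phi> \<and> (\<exists>r\<in>R. a = \<phi> r))"

definition ferrero_mult :: "('a::group_add \<Rightarrow> 'a) set \<Rightarrow> 'a set \<Rightarrow> 'a set \<Rightarrow> 'a \<Rightarrow> 'a \<Rightarrow> 'a" where
  "ferrero_mult \<Phi> R M a b =
     (if b = 0 \<or> rep_of \<Phi> R b \<in> M then 0 else phi_of \<Phi> R b a)"

definition nearring :: "('a::group_add \<Rightarrow> 'a \<Rightarrow> 'a) \<Rightarrow> bool" where
  "nearring mul \<longleftrightarrow> (\<forall>a b c. mul (mul a b) c = mul a (mul b c)) \<and>
                     (\<forall>a b c. mul (a + b) c = mul a c + mul b c)"

definition mequiv :: "('a \<Rightarrow> 'a \<Rightarrow> 'a) \<Rightarrow> 'a \<Rightarrow> 'a \<Rightarrow> bool" where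
  "mequiv mul a b \<longleftrightarrow> (\<forall>x. mul x a = mul x b)"

definition planar_nearring :: "('a::group_add \<Rightarrow> 'a \<Rightarrow> 'a) \<Rightarrow> bool" where
  "planar_nearring mul \<longleftrightarrow> nearring mul \<and>
     (\<exists>a b c. \<not> mequiv mul a b \<and> \<not> mequiv mul a c \<and> \<not> mequiv mul b c) \<and>
     (\<forall>a b c. \<not> mequiv mul a b \<longrightarrow> (\<exists>!x. mul x a = mul x b + c))"

definition distrib_elems :: "('a::group_add \<Rightarrow> 'a \<Rightarrow> 'a) \<Rightarrow> 'a set" where
  "distrib_elems mul = {n. \<forall>a b. mul n (a + b) = mul n a + mul n b}"

definition zero_multipliers :: "('a::zero \<Rightarrow> 'a \<Rightarrow> 'a) \<Rightarrow> 'a set" where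
  "zero_multipliers mul = {n. \<forall>x. mul x n = 0}"

definition add_subgroup :: "'a::group_add set \<Rightarrow> bool" where
  "add_subgroup S \<longleftrightarrow> 0 \<in> S \<and> (\<forall>x\<in>S. \<forall>y\<in>S. x + y \<in> S) \<and> (\<forall>x\<in>S. - x \<in> S)"

definition normal_add_subgroup :: "'a::group_add set \<Rightarrow> bool" where
  "normal_add_subgroup S \<longleftrightarrow> add_subgroup S \<and> (\<forall>n. \<forall>k\<in>S. n + k + - n \<in> S)"

definition subnearring :: "('a::group_add \<Rightarrow> 'a \<Rightarrow> 'a) \<Rightarrow> 'a set \<Rightarrow> bool" where
  "subnearring mul S \<longleftrightarrow> add_subgroup S \<and> (\<forall>x\<in>S. \<forall>y\<in>S. mul x y \<in> S)"

definition is_group_on :: "'a set \<Rightarrow> ('a \<Rightarrow> 'a \<Rightarrow> 'a) \<Rightarrow> bool" where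
  "is_group_on S f \<longleftrightarrow>
     (\<forall>x\<in>S. \<forall>y\<in>S. f x y \<in> S) \<and>
     (\<forall>x\<in>S. \<forall>y\<in>S. \<forall>z\<in>S. f (f x y) z = f x (f y z)) \<and>
     (\<exists>e\<in>S. (\<forall>x\<in>S. f e x = x \<and> f x e = x) \<and> (\<forall>x\<in>S. \<exists>y\<in>S. f x y = e \<and> f y x = e))"

definition nearfield_on :: "('a::group_add \<Rightarrow> 'a \<Rightarrow> 'a) \<Rightarrow> 'a set \<Rightarrow> bool" where
  "nearfield_on mul S \<longleftrightarrow> is_group_on (S - {0}) mul"

definition nearring_ideal :: "('a::group_add \<Rightarrow> 'a \<Rightarrow> 'a) \<Rightarrow> 'a set \<Rightarrow> bool" where
  "nearring_ideal mul I \<longleftrightarrow> normal_add_subgroup I \<and>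
     (\<forall>i\<in>I. \<forall>n. mul i n \<in> I) \<and>
     (\<forall>i\<in>I. \<forall>n m. mul n m - mul n (m + i) \<in> I)"

end

theory Submission
  imports Defs
begin

text \<open>Since the representative \<open>r\<^sub>d\<close> of \<open>d\<close> is not in \<open>M\<close>, every \<open>x\<close> satisfies
  \<open>x * \<psi> r\<^sub>d = \<psi> x\<close>; hence \<open>F - {0}\<close> is the orbit \<open>\<Phi> r\<^sub>d\<close>, multiplication on it is
  composition in \<open>\<Phi>\<close>, and \<open>F\<close> is a nearfield whose multiplicative group is \<open>\<Phi>\<close>.
  Left multiplication by \<open>d\<close> is an additive endomorphism (as \<open>d \<in> D(N)\<close>) with kernel \<open>K\<close>
  and image \<open>F\<close>, injective on \<open>F\<close>: so \<open>K\<close> is normal and \<open>N = K + F\<close> uniquely.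
  Finally \<open>n * m\<close> depends on \<open>m\<close> only through \<open>d * m\<close>, because \<open>d * m = \<phi>\<^sub>m d\<close> determines
  \<open>\<phi>\<^sub>m\<close>; this gives the product formula and the ideal property.\<close>

lemma additive_map_zero:
  fixes f :: "'a::group_add \<Rightarrow> 'b::group_add"
  assumes add: "\<And>a b. f (a + b) = f a + f b"
  shows "f 0 = 0"
  using add[of 0 0] by (metis add_0_right add_left_cancel)

lemma additive_map_minus:
  fixes f :: "'a::group_add \<Rightarrow> 'b::group_add"
  assumes add: "\<And>a b. f (a + b) = f a + f b"
  shows "f (- a) = - f a"
  using add[of a "- a"] additive_map_zero[of f, OF add] by (metis minus_unique right_minus)

lemma add_subgroup_range:
  fixes f :: "'a::group_add \<Rightarrow> 'b::group_add"
  assumes add: "\<And>a b. f (a + b) = f a + f b"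
  shows "add_subgroup (range f)"
  unfolding add_subgroup_def
proof (intro conjI ballI)
  have "0 = f 0" using additive_map_zero[of f, OF add] by simp
  then show "0 \<in> range f" by simp
next
  fix x y assume "x \<in> range f" "y \<in> range f"
  then obtain a b where "x = f a" "y = f b" by blast
  then have "x + y = f (a + b)" using add by simp
  then show "x + y \<in> range f" by simp
next
  fix x assume "x \<in> range f"
  then obtain a where "x = f a" by blast
  then have "- x = f (- a)" using additive_map_minus[of f, OF add] by simp
  then show "- x \<in> range f" by simp
qed

lemma normal_add_subgroup_kernel:
  fixes f :: "'a::group_add \<Rightarrow> 'b::group_add"
  assumes add: "\<And>a b. f (a + b) = f a + f b"
  shows "normal_add_subgroup {x. f x = 0}"
proof -
  have "f (n + k + - n) = f n + f k + - f n" for n k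
    by (simp only: add additive_map_minus[of f, OF add])
  then show ?thesis
    unfolding normal_add_subgroup_def add_subgroup_def
    by (simp add: add additive_map_zero[of f, OF add] additive_map_minus[of f, OF add])
qed

lemma additive_aut_eq_0_iff:
  assumes "additive_aut f"
  shows "f x = 0 \<longleftrightarrow> x = 0"
proof -
  have "f 0 = 0" using assms additive_map_zero unfolding additive_aut_def by blast
  moreover have "inj f" using assms unfolding additive_aut_def by (simp add: bij_is_inj)
  ultimately show ?thesis by (metis injD)
qed

locale ferrero_presentation =
  fixes \<Phi> :: "('a::group_add \<Rightarrow> 'a) set" and R M :: "'a set"
  assumes data: "ferrero_data \<Phi> R M"
begin

abbreviation mul (infixl "\<star>" 70) where "a \<star> b \<equiv> ferrero_mult \<Phi> R M a b"
abbreviation rep where "rep \<equiv> rep_of \<Phi> R"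
abbreviation phi where "phi \<equiv> phi_of \<Phi> R"
abbreviation K where "K \<equiv> zero_multipliers (\<star>)"

lemma additive_aut: "\<phi> \<in> \<Phi> \<Longrightarrow> additive_aut \<phi>"
  using data unfolding ferrero_data_def by simp

lemma id_mem: "id \<in> \<Phi>"
  using data unfolding ferrero_data_def by simp

lemma comp_closed: "\<phi> \<in> \<Phi> \<Longrightarrow> \<psi> \<in> \<Phi> \<Longrightarrow> \<psi> \<circ> \<phi> \<in> \<Phi>"
  using data unfolding ferrero_data_def by simp

lemma inv_closed: "\<phi> \<in> \<Phi> \<Longrightarrow> inv \<phi> \<in> \<Phi>"
  using data unfolding ferrero_data_def by simp

lemma fixed_point_free: "\<phi> \<in> \<Phi> \<Longrightarrow> \<phi> n = n \<Longrightarrow> n \<noteq> 0 \<Longrightarrow> \<phi> = id"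
  using data unfolding ferrero_data_def by (elim conjE) blast

lemma zero_notin_R: "0 \<notin> R"
  using data unfolding ferrero_data_def by simp

lemma orbit_representative: "a \<noteq> 0 \<Longrightarrow> \<exists>!r. r \<in> R \<and> (\<exists>\<phi>\<in>\<Phi>. a = \<phi> r)"
  using data unfolding ferrero_data_def by simp

lemma apply_add: "\<phi> \<in> \<Phi> \<Longrightarrow> \<phi> (x + y) = \<phi> x + \<phi> y"
  using additive_aut unfolding additive_aut_def by blast

lemma apply_eq_0_iff: "\<phi> \<in> \<Phi> \<Longrightarrow> \<phi> x = 0 \<longleftrightarrow> x = 0"
  using additive_aut additive_aut_eq_0_iff by blast

lemma inv_apply: "\<phi> \<in> \<Phi> \<Longrightarrow> inv \<phi> (\<phi> x) = x"
  using additive_aut unfolding additive_aut_def by (simp add: bij_is_inj)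

lemma apply_inv: "\<phi> \<in> \<Phi> \<Longrightarrow> \<phi> (inv \<phi> x) = x"
  using additive_aut unfolding additive_aut_def by (simp add: bij_is_surj surj_f_inv_f)

lemma Phi_cancel:
  assumes "\<phi> \<in> \<Phi>" "\<psi> \<in> \<Phi>" "a \<noteq> 0" "\<phi> a = \<psi> a"
  shows "\<phi> = \<psi>"
proof -
  have "(inv \<psi> \<circ> \<phi>) a = a" using assms inv_apply by simp
  then have "inv \<psi> \<circ> \<phi> = id"
    using assms fixed_point_free comp_closed inv_closed by blast
  then have "\<psi> \<circ> (inv \<psi> \<circ> \<phi>) = \<psi>" by simp
  then show ?thesis using apply_inv[OF assms(2)] by (simp add: fun_eq_iff)
qed

lemma presentation_unique:
  assumes "\<phi> \<in> \<Phi>" "\<psi> \<in> \<Phi>" "r \<in> R" "r' \<in> R" "\<phi> r = \<psi> r'"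
  shows "r = r' \<and> \<phi> = \<psi>"
proof -
  have "r \<noteq> 0" using assms zero_notin_R by auto
  then have "\<phi> r \<noteq> 0" using assms apply_eq_0_iff by blast
  then have "r = r'" using orbit_representative[of "\<phi> r"] assms by blast
  with assms \<open>r \<noteq> 0\<close> show ?thesis using Phi_cancel by blast
qed

lemma rep_of_apply: "\<phi> \<in> \<Phi> \<Longrightarrow> r \<in> R \<Longrightarrow> rep (\<phi> r) = r"
  unfolding rep_of_def by (rule the_equality) (use presentation_unique in blast)+

lemma phi_of_apply: "\<phi> \<in> \<Phi> \<Longrightarrow> r \<in> R \<Longrightarrow> phi (\<phi> r) = \<phi>"
  unfolding phi_of_def by (rule the_equality) (use presentation_unique in blast)+

lemma representation:
  assumes "a \<noteq> 0"
  shows "rep a \<in> R" "phi a \<in> \<Phi>" "a = phi a (rep a)"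
proof -
  obtain r \<phi> where "r \<in> R" "\<phi> \<in> \<Phi>" "a = \<phi> r" using orbit_representative[OF assms] by blast
  then show "rep a \<in> R" "phi a \<in> \<Phi>" "a = phi a (rep a)"
    using rep_of_apply phi_of_apply by simp_all
qed

lemma rep_of_image: "\<phi> \<in> \<Phi> \<Longrightarrow> a \<noteq> 0 \<Longrightarrow> rep (\<phi> a) = rep a"
  using representation[of a] rep_of_apply[of "\<phi> \<circ> phi a" "rep a"] comp_closed by force

lemma orbit_eq: "\<phi> \<in> \<Phi> \<Longrightarrow> (\<lambda>\<psi>. \<psi> (\<phi> a)) ` \<Phi> = (\<lambda>\<psi>. \<psi> a) ` \<Phi>"
proof
  assume "\<phi> \<in> \<Phi>"
  show "(\<lambda>\<psi>. \<psi> (\<phi> a)) ` \<Phi> \<subseteq> (\<lambda>\<psi>. \<psi> a) ` \<Phi>"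
    using \<open>\<phi> \<in> \<Phi>\<close> comp_closed by (auto intro!: image_eqI[where x = "_ \<circ> \<phi>"])
  show "(\<lambda>\<psi>. \<psi> a) ` \<Phi> \<subseteq> (\<lambda>\<psi>. \<psi> (\<phi> a)) ` \<Phi>"
    using \<open>\<phi> \<in> \<Phi>\<close> comp_closed inv_closed inv_apply
    by (auto intro!: image_eqI[where x = "_ \<circ> inv \<phi>"])
qed

lemma mul_eq: "a \<star> b = (if b = 0 \<or> rep b \<in> M then 0 else phi b a)"
  by (simp add: ferrero_mult_def)

lemma mul_zero_right: "a \<star> 0 = 0"
  by (simp add: mul_eq)

lemma mul_zero_left: "0 \<star> a = 0"
  using mul_eq[of 0 a] representation(2) apply_eq_0_iff by auto

lemma zero_multipliers_iff: "n \<in> K \<longleftrightarrow> n = 0 \<or> rep n \<in> M"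
proof
  assume "n \<in> K"
  show "n = 0 \<or> rep n \<in> M"
  proof (rule ccontr)
    assume "\<not> (n = 0 \<or> rep n \<in> M)"
    then have "n \<star> n = phi n n" and "phi n n \<noteq> 0"
      using mul_eq representation(2) apply_eq_0_iff by auto
    with \<open>n \<in> K\<close> show False by (simp add: zero_multipliers_def)
  qed
qed (auto simp: zero_multipliers_def mul_eq)

lemma mul_not_zero_multiplier: "n \<notin> K \<Longrightarrow> a \<star> n = phi n a"
  using zero_multipliers_iff mul_eq by simp

lemma zero_multiplier_apply: "\<phi> \<in> \<Phi> \<Longrightarrow> k \<in> K \<Longrightarrow> \<phi> k \<in> K"
  by (cases "k = 0") (simp_all add: zero_multipliers_iff rep_of_image apply_eq_0_iff)

lemma zero_multipliers_invariant: "\<phi> \<in> \<Phi> \<Longrightarrow> \<phi> ` K = K"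
proof
  assume "\<phi> \<in> \<Phi>"
  then show "\<phi> ` K \<subseteq> K" using zero_multiplier_apply by blast
  show "K \<subseteq> \<phi> ` K"
  proof
    fix k assume "k \<in> K"
    then have "inv \<phi> k \<in> K" using \<open>\<phi> \<in> \<Phi>\<close> zero_multiplier_apply inv_closed by blast
    moreover have "k = \<phi> (inv \<phi> k)" using apply_inv[OF \<open>\<phi> \<in> \<Phi>\<close>] by simp
    ultimately show "k \<in> \<phi> ` K" by blast
  qed
qed

lemma zero_multiplier_mul: "i \<in> K \<Longrightarrow> i \<star> n \<in> K"
proof (cases "n = 0 \<or> rep n \<in> M")
  case True
  then have "i \<star> n = 0" using mul_eq[of i n] by simp
  then show ?thesis using zero_multipliers_iff by simp
next
  case False
  then have "i \<star> n = phi n i" using mul_eq[of i n] by simp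
  moreover assume "i \<in> K"
  ultimately show ?thesis using False zero_multiplier_apply representation(2) by simp
qed

lemma mul_orbit:
  assumes "\<psi> \<in> \<Phi>" "r \<in> R" "r \<notin> M"
  shows "x \<star> \<psi> r = \<psi> x"
proof -
  have "\<psi> r \<noteq> 0" using assms zero_notin_R apply_eq_0_iff by auto
  then show ?thesis using assms mul_eq rep_of_apply phi_of_apply by simp
qed

end

locale ferrero_distributive_element = ferrero_presentation +
  fixes d :: 'a
  assumes d_distrib: "d \<in> distrib_elems (\<star>)"
    and d_nonzero: "d \<noteq> 0"
    and d_not_zero_multiplier: "d \<notin> K"
begin

abbreviation F where "F \<equiv> range ((\<star>) d)"
abbreviation r\<^sub>d where "r\<^sub>d \<equiv> rep d"

lemma mul_d_add: "d \<star> (a + b) = d \<star> a + d \<star> b"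
  using d_distrib by (simp add: distrib_elems_def)

lemma mul_d_minus: "d \<star> (- a) = - (d \<star> a)"
  using additive_map_minus[of "(\<star>) d", OF mul_d_add] .

lemma mul_d_diff: "d \<star> (a - b) = d \<star> a - d \<star> b"
  by (simp only: diff_conv_add_uminus mul_d_add mul_d_minus)

lemma mul_d_eq_0_iff: "d \<star> n = 0 \<longleftrightarrow> n \<in> K"
proof
  assume "d \<star> n = 0"
  show "n \<in> K"
  proof (rule ccontr)
    assume "n \<notin> K"
    then have "n \<noteq> 0" using zero_multipliers_iff by blast
    with \<open>n \<notin> K\<close> have "d \<star> n \<noteq> 0"
      using mul_not_zero_multiplier representation(2) apply_eq_0_iff d_nonzero by simp
    with \<open>d \<star> n = 0\<close> show False by simp
  qed
qed (simp add: zero_multipliers_def)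

lemma mul_d_zero_multiplier: "k \<in> K \<Longrightarrow> d \<star> k = 0"
  using mul_d_eq_0_iff by blast

lemma zero_multipliers_eq_kernel: "K = {n. d \<star> n = 0}"
  using mul_d_eq_0_iff by blast

lemma normal_zero_multipliers: "normal_add_subgroup K"
  unfolding zero_multipliers_eq_kernel using normal_add_subgroup_kernel[of "(\<star>) d", OF mul_d_add] .

lemma rep_d: "r\<^sub>d \<in> R" "r\<^sub>d \<notin> M" "r\<^sub>d \<noteq> 0" "phi d \<in> \<Phi>" "d = phi d r\<^sub>d"
proof -
  show "r\<^sub>d \<in> R" "phi d \<in> \<Phi>" "d = phi d r\<^sub>d" using representation[OF d_nonzero] by simp_all
  show "r\<^sub>d \<noteq> 0" using \<open>r\<^sub>d \<in> R\<close> zero_notin_R by auto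
  show "r\<^sub>d \<notin> M" using d_not_zero_multiplier zero_multipliers_iff by blast
qed

lemma mul_orbit_rep_d: "\<psi> \<in> \<Phi> \<Longrightarrow> x \<star> \<psi> r\<^sub>d = \<psi> x"
  using mul_orbit rep_d(1,2) by blast

lemma zero_mem_range_mul_d: "0 \<in> F"
proof -
  have "d \<star> 0 \<in> F" by (rule rangeI)
  then show ?thesis by (simp only: mul_zero_right)
qed

lemma range_mul_d_eq_orbit_d: "F = (\<lambda>\<psi>. \<psi> d) ` \<Phi> \<union> {0}"
proof
  show "F \<subseteq> (\<lambda>\<psi>. \<psi> d) ` \<Phi> \<union> {0}"
    using mul_eq representation(2) by auto
  have "\<psi> d \<in> F" if "\<psi> \<in> \<Phi>" for \<psi>
    using mul_orbit_rep_d[OF that, of d] by (metis rangeI)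
  then show "(\<lambda>\<psi>. \<psi> d) ` \<Phi> \<union> {0} \<subseteq> F" using zero_mem_range_mul_d by blast
qed

lemma range_mul_d_eq_orbit_rep: "F = (\<lambda>\<psi>. \<psi> r\<^sub>d) ` \<Phi> \<union> {0}"
  using range_mul_d_eq_orbit_d orbit_eq[OF rep_d(4), of r\<^sub>d] rep_d(5)[symmetric] by simp

lemma range_mul_d_nonzero: "f \<in> F - {0} \<longleftrightarrow> (\<exists>\<psi>\<in>\<Phi>. f = \<psi> r\<^sub>d)"
  using range_mul_d_eq_orbit_rep apply_eq_0_iff rep_d(3) by auto

lemma range_mul_d_nonzero_mul:
  assumes "\<phi> \<in> \<Phi>" "\<psi> \<in> \<Phi>"
  shows "\<phi> r\<^sub>d \<star> \<psi> r\<^sub>d = (\<psi> \<circ> \<phi>) r\<^sub>d" and "(\<psi> \<circ> \<phi>) r\<^sub>d \<in> F - {0}"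
proof -
  show "\<phi> r\<^sub>d \<star> \<psi> r\<^sub>d = (\<psi> \<circ> \<phi>) r\<^sub>d" using assms(2) mul_orbit_rep_d by simp
  show "(\<psi> \<circ> \<phi>) r\<^sub>d \<in> F - {0}" using comp_closed[OF assms] range_mul_d_nonzero by blast
qed

lemma range_mul_d_nonzero_mul_closed: "x \<in> F - {0} \<Longrightarrow> y \<in> F - {0} \<Longrightarrow> x \<star> y \<in> F - {0}"
  using range_mul_d_nonzero_mul range_mul_d_nonzero by metis

lemma range_mul_d_subnearring: "subnearring (\<star>) F"
  unfolding subnearring_def
proof (intro conjI ballI)
  show "add_subgroup F" using add_subgroup_range[of "(\<star>) d", OF mul_d_add] .
  fix x y assume "x \<in> F" "y \<in> F"
  then consider "x = 0 \<or> y = 0" | "x \<in> F - {0}" "y \<in> F - {0}" by blast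
  then show "x \<star> y \<in> F"
  proof cases
    case 1
    then have "x \<star> y = 0" using mul_zero_left mul_zero_right by auto
    then show ?thesis using zero_mem_range_mul_d by simp
  next
    case 2
    then show ?thesis using range_mul_d_nonzero_mul_closed by blast
  qed
qed

lemma range_mul_d_nearfield: "nearfield_on (\<star>) F"
  unfolding nearfield_on_def is_group_on_def
proof (intro conjI ballI)
  show "x \<star> y \<in> F - {0}" if "x \<in> F - {0}" "y \<in> F - {0}" for x y
    using that range_mul_d_nonzero_mul_closed by blast
  show "x \<star> y \<star> z = x \<star> (y \<star> z)" if y: "y \<in> F - {0}" and z: "z \<in> F - {0}" for x y z
  proof -
    obtain \<psi> where \<psi>: "\<psi> \<in> \<Phi>" "y = \<psi> r\<^sub>d" using y range_mul_d_nonzero by blast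
    obtain \<chi> where \<chi>: "\<chi> \<in> \<Phi>" "z = \<chi> r\<^sub>d" using z range_mul_d_nonzero by blast
    have "y \<star> z = (\<chi> \<circ> \<psi>) r\<^sub>d" using \<psi> \<chi> range_mul_d_nonzero_mul(1) by simp
    then show ?thesis
      using \<psi> \<chi> mul_orbit_rep_d[OF \<chi>(1)] mul_orbit_rep_d[OF \<psi>(1)]
        mul_orbit_rep_d[OF comp_closed[OF \<psi>(1) \<chi>(1)]] by simp
  qed
  have "id r\<^sub>d \<in> F - {0}" using range_mul_d_nonzero id_mem by blast
  then have unit: "r\<^sub>d \<in> F - {0}" by simp
  have neutral: "r\<^sub>d \<star> x = x \<and> x \<star> r\<^sub>d = x" if x: "x \<in> F - {0}" for x
  proof -
    obtain \<psi> where "\<psi> \<in> \<Phi>" "x = \<psi> r\<^sub>d" using x range_mul_d_nonzero by blast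
    moreover have "x \<star> r\<^sub>d = x" using mul_orbit_rep_d[OF id_mem, of x] by simp
    ultimately show ?thesis using mul_orbit_rep_d[of \<psi> r\<^sub>d] by simp
  qed
  have inverse: "\<exists>y\<in>F - {0}. x \<star> y = r\<^sub>d \<and> y \<star> x = r\<^sub>d" if x: "x \<in> F - {0}" for x
  proof -
    obtain \<psi> where \<psi>: "\<psi> \<in> \<Phi>" "x = \<psi> r\<^sub>d" using x range_mul_d_nonzero by blast
    then have "inv \<psi> r\<^sub>d \<in> F - {0}" using inv_closed range_mul_d_nonzero by blast
    moreover have "x \<star> inv \<psi> r\<^sub>d = r\<^sub>d"
      using \<psi> mul_orbit_rep_d[OF inv_closed[OF \<psi>(1)], of x] inv_apply by simp
    moreover have "inv \<psi> r\<^sub>d \<star> x = r\<^sub>d"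
      using \<psi> mul_orbit_rep_d[OF \<psi>(1), of "inv \<psi> r\<^sub>d"] apply_inv by simp
    ultimately show ?thesis by blast
  qed
  show "\<exists>e\<in>F - {0}. (\<forall>x\<in>F - {0}. e \<star> x = x \<and> x \<star> e = x) \<and>
      (\<forall>x\<in>F - {0}. \<exists>y\<in>F - {0}. x \<star> y = e \<and> y \<star> x = e)"
    using unit neutral inverse by blast
qed

lemma phi_of_range_mul_d: "\<psi> \<in> \<Phi> \<Longrightarrow> phi (\<psi> r\<^sub>d) = \<psi>"
  using phi_of_apply rep_d(1) by blast

lemma bij_betw_phi_of_range_mul_d: "bij_betw phi (F - {0}) \<Phi>"
proof (rule bij_betw_byWitness[where f' = "\<lambda>\<psi>. \<psi> r\<^sub>d"])
  show "\<forall>x\<in>F - {0}. phi x r\<^sub>d = x"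
  proof
    fix x assume "x \<in> F - {0}"
    then obtain \<psi> where "\<psi> \<in> \<Phi>" "x = \<psi> r\<^sub>d" using range_mul_d_nonzero by blast
    then show "phi x r\<^sub>d = x" using phi_of_range_mul_d[of \<psi>] by simp
  qed
  show "\<forall>\<psi>\<in>\<Phi>. phi (\<psi> r\<^sub>d) = \<psi>" using phi_of_range_mul_d by blast
  show "phi ` (F - {0}) \<subseteq> \<Phi>"
  proof
    fix \<chi> assume "\<chi> \<in> phi ` (F - {0})"
    then obtain x where x: "x \<in> F - {0}" "\<chi> = phi x" by blast
    then obtain \<psi> where "\<psi> \<in> \<Phi>" "x = \<psi> r\<^sub>d" using range_mul_d_nonzero by blast
    then show "\<chi> \<in> \<Phi>" using x(2) phi_of_range_mul_d[of \<psi>] by simp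
  qed
  show "(\<lambda>\<psi>. \<psi> r\<^sub>d) ` \<Phi> \<subseteq> F - {0}" using range_mul_d_nonzero by blast
qed

lemma phi_of_mul_range_mul_d:
  assumes "x \<in> F - {0}" "y \<in> F - {0}"
  shows "phi (x \<star> y) = phi y \<circ> phi x"
proof -
  obtain \<phi> where \<phi>: "\<phi> \<in> \<Phi>" "x = \<phi> r\<^sub>d" using assms(1) range_mul_d_nonzero by blast
  obtain \<psi> where \<psi>: "\<psi> \<in> \<Phi>" "y = \<psi> r\<^sub>d" using assms(2) range_mul_d_nonzero by blast
  have "x \<star> y = (\<psi> \<circ> \<phi>) r\<^sub>d" using \<phi> \<psi> range_mul_d_nonzero_mul(1) by simp
  then show ?thesis
    using \<phi> \<psi> phi_of_range_mul_d[OF comp_closed[OF \<phi>(1) \<psi>(1)]]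
      phi_of_range_mul_d[OF \<phi>(1)] phi_of_range_mul_d[OF \<psi>(1)] by simp
qed

lemma range_mul_d_nonzero_not_zero_multiplier: "f \<in> F - {0} \<Longrightarrow> f \<notin> K"
proof -
  assume "f \<in> F - {0}"
  then obtain \<psi> where "\<psi> \<in> \<Phi>" "f = \<psi> r\<^sub>d" using range_mul_d_nonzero by blast
  then have "rep f \<notin> M" using rep_of_apply[OF _ rep_d(1)] rep_d(2) by simp
  with \<open>f \<in> F - {0}\<close> show "f \<notin> K" using zero_multipliers_iff by blast
qed

lemma mul_d_range_eq_0_iff: "f \<in> F \<Longrightarrow> d \<star> f = 0 \<longleftrightarrow> f = 0"
  using mul_d_eq_0_iff range_mul_d_nonzero_not_zero_multiplier mul_zero_right by blast

lemma inj_on_mul_d_range: "inj_on ((\<star>) d) F"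
proof (rule inj_onI)
  fix f g assume f: "f \<in> F" and g: "g \<in> F" and eq: "d \<star> f = d \<star> g"
  show "f = g"
  proof (cases "f = 0 \<or> g = 0")
    case True
    have "d \<star> f = 0 \<longleftrightarrow> d \<star> g = 0" using eq by simp
    then show ?thesis using True mul_d_range_eq_0_iff[OF f] mul_d_range_eq_0_iff[OF g] by blast
  next
    case False
    obtain \<phi> where \<phi>: "\<phi> \<in> \<Phi>" "f = \<phi> r\<^sub>d" using f False range_mul_d_nonzero by blast
    obtain \<psi> where \<psi>: "\<psi> \<in> \<Phi>" "g = \<psi> r\<^sub>d" using g False range_mul_d_nonzero by blast
    have "\<phi> d = \<psi> d" using eq \<phi> \<psi> mul_orbit_rep_d[OF \<phi>(1)] mul_orbit_rep_d[OF \<psi>(1)] by simp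
    then have "\<phi> = \<psi>" using Phi_cancel \<phi>(1) \<psi>(1) d_nonzero by blast
    then show ?thesis using \<phi> \<psi> by simp
  qed
qed

lemma mul_d_image_range: "(\<star>) d ` F = F"
proof
  show "(\<star>) d ` F \<subseteq> F" by (intro image_mono) simp
  show "F \<subseteq> (\<star>) d ` F"
  proof
    fix f assume "f \<in> F"
    then have "f \<in> (\<lambda>\<psi>. \<psi> d) ` \<Phi> \<union> {0}" using range_mul_d_eq_orbit_d by simp
    then consider "f = 0" | \<psi> where "\<psi> \<in> \<Phi>" "f = \<psi> d" by blast
    then show "f \<in> (\<star>) d ` F"
    proof cases
      case 1
      then show ?thesis using zero_mem_range_mul_d mul_zero_right by (intro image_eqI[where x = 0]) simp_all
    next
      case (2 \<psi>)
      have "\<psi> r\<^sub>d \<in> F" using 2(1) range_mul_d_nonzero by blast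
      moreover have "f = d \<star> \<psi> r\<^sub>d" using 2 mul_orbit_rep_d[OF 2(1)] by simp
      ultimately show ?thesis by blast
    qed
  qed
qed

lemma zero_multipliers_range_mul_d_decomposition:
  "\<exists>!p. fst p \<in> K \<and> snd p \<in> F \<and> n = fst p + snd p"
proof -
  have "d \<star> n \<in> (\<star>) d ` F" unfolding mul_d_image_range by simp
  then obtain f where f: "f \<in> F" "d \<star> f = d \<star> n" by (metis imageE)
  have "d \<star> (n - f) = 0" using f(2) by (simp add: mul_d_diff)
  then have "n - f \<in> K" using mul_d_eq_0_iff by blast
  show ?thesis
  proof (rule ex1I[of _ "(n - f, f)"])
    show "fst (n - f, f) \<in> K \<and> snd (n - f, f) \<in> F \<and> n = fst (n - f, f) + snd (n - f, f)"
      using \<open>n - f \<in> K\<close> f(1) by simp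
  next
    fix p assume p: "fst p \<in> K \<and> snd p \<in> F \<and> n = fst p + snd p"
    then have "d \<star> fst p = 0" using mul_d_eq_0_iff by blast
    then have "d \<star> snd p = d \<star> f" using p f(2) mul_d_add by simp
    then have "snd p = f" using inj_onD[OF inj_on_mul_d_range] p f(1) by blast
    moreover from p have "fst p = n - snd p" by simp
    ultimately show "p = (n - f, f)" by (simp add: prod_eq_iff)
  qed
qed

lemma mul_right_cong:
  assumes "d \<star> m = d \<star> m'"
  shows "x \<star> m = x \<star> m'"
proof (cases "m \<in> K")
  case True
  then have "d \<star> m' = 0" using assms mul_d_zero_multiplier by simp
  then have "m' \<in> K" using mul_d_eq_0_iff by blast
  with True show ?thesis by (simp add: zero_multipliers_def)
next
  case False
  then have "d \<star> m \<noteq> 0" using mul_d_eq_0_iff by blast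
  then have "d \<star> m' \<noteq> 0" using assms by simp
  then have "m' \<notin> K" using mul_d_zero_multiplier by blast
  have "m \<noteq> 0" "m' \<noteq> 0" using False \<open>m' \<notin> K\<close> zero_multipliers_iff by auto
  have "phi m d = phi m' d"
    using assms mul_not_zero_multiplier[OF False] mul_not_zero_multiplier[OF \<open>m' \<notin> K\<close>] by simp
  then have "phi m = phi m'"
    using Phi_cancel representation(2)[OF \<open>m \<noteq> 0\<close>] representation(2)[OF \<open>m' \<noteq> 0\<close>] d_nonzero
    by blast
  then show ?thesis
    using mul_not_zero_multiplier[OF False] mul_not_zero_multiplier[OF \<open>m' \<notin> K\<close>] by simp
qed

lemma mul_add_zero_multiplier_left:
  assumes "i \<in> K"
  shows "x \<star> (i + m) = x \<star> m"
proof (rule mul_right_cong)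
  show "d \<star> (i + m) = d \<star> m" using assms mul_d_add mul_d_zero_multiplier by simp
qed

lemma mul_add_zero_multiplier_right:
  assumes "i \<in> K"
  shows "x \<star> (m + i) = x \<star> m"
proof (rule mul_right_cong)
  show "d \<star> (m + i) = d \<star> m" using assms mul_d_add mul_d_zero_multiplier by simp
qed

lemma mul_decomposed:
  assumes "k' \<in> K" "f' \<in> F"
  shows "(k + f) \<star> (k' + f') = (if f' = 0 then 0 else phi f' k + phi f' f)"
proof -
  have "(k + f) \<star> (k' + f') = (k + f) \<star> f'" using assms(1) mul_add_zero_multiplier_left by simp
  also have "\<dots> = (if f' = 0 then 0 else phi f' k + phi f' f)"
  proof (cases "f' = 0")
    case False
    then have "f' \<notin> K" using assms(2) range_mul_d_nonzero_not_zero_multiplier by blast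
    then show ?thesis
      using False mul_not_zero_multiplier apply_add[OF representation(2)[OF False]] by simp
  qed (simp add: mul_zero_right)
  finally show ?thesis .
qed

lemma zero_multipliers_ideal: "nearring_ideal (\<star>) K"
  unfolding nearring_ideal_def
  using normal_zero_multipliers zero_multiplier_mul mul_add_zero_multiplier_right zero_multipliers_iff
  by simp

end

theorem mainTheorem6:
  fixes \<Phi> :: "('a::group_add \<Rightarrow> 'a) set" and R M :: "'a set" and d :: 'a
  defines "mul \<equiv> ferrero_mult \<Phi> R M"
  defines "K \<equiv> zero_multipliers mul"
  defines "F \<equiv> range (mul d)"
  assumes data: "ferrero_data \<Phi> R M"
    and planar: "planar_nearring mul"
    and dD: "d \<in> distrib_elems mul" and d0: "d \<noteq> 0" and dK: "d \<notin> K"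
  shows "F = (\<lambda>\<phi>. \<phi> d) ` \<Phi> \<union> {0}
       \<and> subnearring mul F \<and> nearfield_on mul F
       \<and> (\<exists>h. bij_betw h (F - {0}) \<Phi> \<and>
               (\<forall>x\<in>F - {0}. \<forall>y\<in>F - {0}. h (mul x y) = h y \<circ> h x))
       \<and> normal_add_subgroup K \<and> (\<forall>\<phi>\<in>\<Phi>. \<phi> ` K = K)
       \<and> (\<forall>n. \<exists>!p. fst p \<in> K \<and> snd p \<in> F \<and> n = fst p + snd p)
       \<and> (\<forall>k\<in>K. \<forall>k'\<in>K. \<forall>f\<in>F. \<forall>f'\<in>F.
            mul (k + f) (k' + f') =
              (if f' = 0 then 0 else phi_of \<Phi> R f' k + phi_of \<Phi> R f' f))
       \<and> nearring_ideal mul K"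
proof -
  interpret ferrero_distributive_element \<Phi> R M d
    using data dD d0 dK unfolding mul_def K_def by unfold_locales
  show ?thesis
    unfolding F_def K_def mul_def
  proof (intro conjI)
    show "\<exists>h. bij_betw h (range ((\<star>) d) - {0}) \<Phi> \<and>
        (\<forall>x\<in>range ((\<star>) d) - {0}. \<forall>y\<in>range ((\<star>) d) - {0}. h (x \<star> y) = h y \<circ> h x)"
      using bij_betw_phi_of_range_mul_d phi_of_mul_range_mul_d by blast
    show "\<forall>k\<in>zero_multipliers (\<star>). \<forall>k'\<in>zero_multipliers (\<star>). \<forall>f\<in>range ((\<star>) d). \<forall>f'\<in>range ((\<star>) d).
        (k + f) \<star> (k' + f') = (if f' = 0 then 0 else phi f' k + phi f' f)"
      using mul_decomposed by blast
  qed (use range_mul_d_eq_orbit_d range_mul_d_subnearring range_mul_d_nearfield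
      normal_zero_multipliers zero_multipliers_invariant
      zero_multipliers_range_mul_d_decomposition zero_multipliers_ideal in blast)+
qed

end
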